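(* Let $\mathbb P$ be an LTF. Then $\mathbb P\times_{E_0}\mathbb P$ forces that $x_{\mathrm{left}}$ and $x_{\mathrm{right}}$ are not $E_0$-equivalent, where $\langle x_{\mathrm{left}},x_{\mathrm{right}}\rangle$ is the generic pair of reals, i.e. the unique pair with $\langle x_{\mathrm{left}},x_{\mathrm{right}}\rangle\in[T]\times[T']$ for all $\langle T,T'\rangle$ in the generic filter.
   Context: Notation. $2^{<\omega}$ is the set of finite binary strings, $\mathrm{lh}(s)$ the length of $s$, $s\subseteq t$ means $t$ extends $s$. For $s\in 2^{<\omega}$ and $x\in 2^\omega$, $s\cdot x\in 2^\omega$ is given by $(s\cdot x)(k)=x(k)+s(k)\bmod 2$ for $k<\mathrm{lh}(s)$ and $(s\cdot x)(k)=x(k)$ otherwise. For strings $s,t$ with $\mathrm{lh}(s)\le\mathrm{lh}(t)$, $s\cdot t$ is the string of length $\mathrm{lh}(t)$ with $(s\cdot t)(k)=t(k)+s(k)\bmod 2$ for $k<\mathrm{lh}(s)$ and $(s\cdot t)(k)=t(k)$ otherwise; if $\mathrm{lh}(s)>\mathrm{lh}(t)$ then $s\cdot t=(s\restriction\mathrm{lh}(t))\cdot t$. For $T\subseteq 2^{<\omega}$, $s\cdot T=\{s\cdot t:t\in T\}$. For a tree $T$ and $s\in T$, $T\upharpoonright s=\{t\in T:s\subseteq t\lor t\subseteq s\}$. A perfect tree is a nonempty tree $T\subseteq 2^{<\omega}$ with no endpoints and no isolated branches; its stem $\mathrm{stem}(T)$ is the largest $s\in T$ with $T=T\upharpoonright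 s$; $[T]=\{a\in 2^\omega:\forall m\,(a\restriction m\in T)\}$. A perfect tree $T$ is large, written $T\in\mathbf{LT}$, if there are nonempty strings $q^i_n$ ($n<\omega$, $i=0,1$) with $\mathrm{lh}(q^0_n)=\mathrm{lh}(q^1_n)\ge1$ and $q^i_n(0)=i$, such that $T$ consists exactly of all initial segments of strings $r^\frown q^{i(0)}_0{}^\frown\cdots{}^\frown q^{i(n)}_n$, where $r=\mathrm{stem}(T)$, $n<\omega$, $i(0),\dots,i(n)\in\{0,1\}$. A large-tree forcing notion (LTF) is a set $\mathbb P\subseteq\mathbf{LT}$ such that $T\upharpoonright u\in\mathbb P$ whenever $u\in T\in\mathbb P$, and $s\cdot T\in\mathbb P$ whenever $T\in\mathbb P$ and $s\in 2^{<\omega}$. The conditional product $\mathbb P\times_{E_0}\mathbb P$ is the set of pairs $\langle T,T'\rangle$ of trees $T,T'\in\mathbb P$ such that $T'=s\cdot T$ for some $s\in 2^{<\omega}$, ordered componentwise by inclusion (smaller is stronger). $E_0$ is the equivalence relation on $2^\omega$: $x\,E_0\,y$ iff $x(n)=y(n)$ for all but finitely many $n$, equivalently $y=\sigma\cdot x$ for some $\sigma\in 2^{<\omega}$. *)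

theory Defs
  imports Main "HOL-Library.Sublist"
begin

text \<open>Binary strings are bool lists (False = 0, True = 1); reals in 2^omega are nat => bool.
Addition mod 2 on bool is inequality.\<close>

definition smul_real :: "bool list \<Rightarrow> (nat \<Rightarrow> bool) \<Rightarrow> (nat \<Rightarrow> bool)" where
  "smul_real s x = (\<lambda>k. if k < length s then x k \<noteq> s ! k else x k)"

definition smul_str :: "bool list \<Rightarrow> bool list \<Rightarrow> bool list" where
  "smul_str s t = map (\<lambda>k. if k < length s then t ! k \<noteq> s ! k else t ! k) [0..<length t]"

definition smul_tree :: "bool list \<Rightarrow> bool list set \<Rightarrow> bool list set" where
  "smul_tree s T = smul_str s ` T"

definition restr :: "bool list set \<Rightarrow> bool list \<Rightarrow> bool list set" where
  "restr T u = {t \<in> T. prefix u t \<or> prefix t u}"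

definition is_tree :: "bool list set \<Rightarrow> bool" where
  "is_tree T \<longleftrightarrow> T \<noteq> {} \<and> (\<forall>t\<in>T. \<forall>u. prefix u t \<longrightarrow> u \<in> T)"

definition perfect_tree :: "bool list set \<Rightarrow> bool" where
  "perfect_tree T \<longleftrightarrow> is_tree T
     \<and> (\<forall>t\<in>T. \<exists>b. t @ [b] \<in> T)
     \<and> (\<forall>t\<in>T. \<exists>u\<in>T. prefix t u \<and> u @ [False] \<in> T \<and> u @ [True] \<in> T)"

definition is_stem :: "bool list set \<Rightarrow> bool list \<Rightarrow> bool" where
  "is_stem T r \<longleftrightarrow> r \<in> T \<and> restr T r = T \<and> (\<forall>s\<in>T. restr T s = T \<longrightarrow> length s \<le> length r)"

definition stem :: "bool list set \<Rightarrow> bool list" where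
  "stem T = (THE r. is_stem T r)"

definition body :: "bool list set \<Rightarrow> (nat \<Rightarrow> bool) set" where
  "body T = {a. \<forall>m. map a [0..<m] \<in> T}"

text \<open>Large trees: q n i is the string q^i_n.\<close>
definition LT :: "bool list set \<Rightarrow> bool" where
  "LT T \<longleftrightarrow> perfect_tree T \<and>
    (\<exists>q :: nat \<Rightarrow> bool \<Rightarrow> bool list.
       (\<forall>n. length (q n False) = length (q n True) \<and> length (q n True) \<ge> 1) \<and>
       (\<forall>n i. q n i ! 0 = i) \<and>
       T = {t. \<exists>(n::nat) (i::nat \<Rightarrow> bool).
                 prefix t (stem T @ concat (map (\<lambda>k. q k (i k)) [0..<Suc n]))})"

definition LTF :: "bool list set set \<Rightarrow> bool" where
  "LTF P \<longleftrightarrow> (\<forall>T\<in>P. LT T)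
     \<and> (\<forall>T\<in>P. \<forall>u\<in>T. restr T u \<in> P)
     \<and> (\<forall>T\<in>P. \<forall>s. smul_tree s T \<in> P)"

definition cprod :: "bool list set set \<Rightarrow> (bool list set \<times> bool list set) set" where
  "cprod P = {(T, T'). T \<in> P \<and> T' \<in> P \<and> (\<exists>s. T' = smul_tree s T)}"

end

theory Submission
  imports Defs
begin

text \<open>Let \<open>T' = s\<cdot>T\<close> with \<open>T\<close> large, with stem \<open>r\<close> and first blocks \<open>q\<^sup>0\<^sub>0, q\<^sup>1\<^sub>0\<close>.
  Flipping the bits where \<open>q\<^sup>0\<^sub>0\<close> and \<open>q\<^sup>1\<^sub>0\<close> differ is a symmetry \<open>w\<close> of \<open>T\<close>
  which moves \<open>u = r q\<^sup>0\<^sub>0\<close> to \<open>w\<cdot>u = r q\<^sup>1\<^sub>0 \<noteq> u\<close>. Passing to \<open>S = T\<restriction>u\<close>, the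
  candidates \<open>s\<cdot>S\<close> and \<open>s\<cdot>w\<cdot>S\<close> for the right side are both below \<open>T'\<close>, and their
  only nodes of length \<open>|u|\<close> are the distinct strings \<open>s\<cdot>u\<close> and \<open>s\<cdot>w\<cdot>u\<close>. At least one
  of them differs from \<open>\<sigma>\<cdot>u\<close>; choosing that side, no \<open>x \<in> [S]\<close> has \<open>\<sigma>\<cdot>x\<close> in the
  right body. This density statement is what it means for the conditional product to
  force that the generic reals are not \<open>E\<^sub>0\<close>-equivalent.\<close>

lemma length_smul_str [simp]: "length (smul_str s t) = length t"
  by (simp add: smul_str_def)

lemma nth_smul_str [simp]:
  "k < length t \<Longrightarrow> smul_str s t ! k = (if k < length s then t ! k \<noteq> s ! k else t ! k)"
  by (simp add: smul_str_def)

lemma smul_str_smul_str_self [simp]: "smul_str s (smul_str s t) = t"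
  by (rule nth_equalityI) auto

lemma smul_str_inject [simp]: "smul_str s a = smul_str s b \<longleftrightarrow> a = b"
  by (metis smul_str_smul_str_self)

lemma smul_str_Nil [simp]: "smul_str [] t = t"
  by (rule nth_equalityI) auto

lemma prefix_smul_str: "prefix a b \<Longrightarrow> prefix (smul_str s a) (smul_str s b)"
proof -
  assume "prefix a b"
  then obtain zs where b: "b = a @ zs" by (auto simp: prefix_def)
  have "smul_str s a = take (length a) (smul_str s b)"
    unfolding b by (rule nth_equalityI) (auto simp: nth_append)
  then show ?thesis by (metis take_is_prefix)
qed

lemma map_smul_real: "map (smul_real \<sigma> x) [0..<n] = smul_str \<sigma> (map x [0..<n])"
  by (rule nth_equalityI) (auto simp: smul_real_def)

definition str_xor :: "bool list \<Rightarrow> bool list \<Rightarrow> bool list" where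
  "str_xor s w = map (\<lambda>k. (k < length s \<and> s ! k) \<noteq> (k < length w \<and> w ! k))
                   [0..<max (length s) (length w)]"

lemma smul_str_smul_str: "smul_str s (smul_str w t) = smul_str (str_xor s w) t"
  by (rule nth_equalityI) (auto simp: str_xor_def)

lemma smul_tree_smul_tree: "smul_tree s (smul_tree w T) = smul_tree (str_xor s w) T"
  by (auto simp: smul_tree_def smul_str_smul_str image_image)

lemma smul_tree_Nil [simp]: "smul_tree [] T = T"
  by (simp add: smul_tree_def)

lemma smul_tree_mono: "S \<subseteq> T \<Longrightarrow> smul_tree s S \<subseteq> smul_tree s T"
  by (auto simp: smul_tree_def)

lemma smul_tree_level:
  assumes "\<forall>t\<in>S. length t = n \<longrightarrow> t = u"
  shows "\<forall>t\<in>smul_tree s S. length t = n \<longrightarrow> t = smul_str s u"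
  using assms by (auto simp: smul_tree_def)

lemma restr_level: "\<forall>t\<in>restr T u. length t = length u \<longrightarrow> t = u"
  by (auto simp: restr_def prefix_def)

lemma body_level:
  assumes "x \<in> body S" and "\<forall>t\<in>S. length t = n \<longrightarrow> t = u"
  shows "map x [0..<n] = u"
  using assms by (auto simp: body_def)

lemma bodies_separated:
  assumes "\<forall>t\<in>S. length t = n \<longrightarrow> t = u" and "\<forall>t\<in>S'. length t = n \<longrightarrow> t = v"
    and "smul_str \<sigma> u \<noteq> v"
  shows "\<forall>x\<in>body S. smul_real \<sigma> x \<notin> body S'"
  using assms body_level[of _ S n u] body_level[of _ S' n v] by (metis map_smul_real)

definition block_swap :: "bool list \<Rightarrow> bool list \<Rightarrow> bool list \<Rightarrow> bool list" where
  "block_swap r a b = replicate (length r) False @ map2 (\<noteq>) a b"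

lemma block_swap_commute: "block_swap r a b = block_swap r b a"
  by (auto simp: block_swap_def intro!: nth_equalityI)

lemma smul_block_swap:
  "length a = length b \<Longrightarrow> smul_str (block_swap r a b) (r @ a @ rest) = r @ b @ rest"
  by (intro nth_equalityI) (auto simp: block_swap_def nth_append)

lemma smul_block_swap':
  "length a = length b \<Longrightarrow> smul_str (block_swap r a b) (r @ b @ rest) = r @ a @ rest"
  by (metis block_swap_commute smul_block_swap)

lemma concat_map_upt_Suc:
  "concat (map f [0..<Suc n]) = f 0 @ concat (map f [1..<Suc n])"
  by (simp del: upt_Suc add: upt_conv_Cons)

lemma block_swap_closed:
  assumes "length (q 0 False) = length (q 0 True)"
    and T: "T = {t. \<exists>(n::nat) i. prefix t (r @ concat (map (\<lambda>k. q k (i k)) [0..<Suc n]))}"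
  shows "smul_tree (block_swap r (q 0 False) (q 0 True)) T \<subseteq> T"
proof
  let ?w = "block_swap r (q 0 False) (q 0 True)"
  fix t' assume "t' \<in> smul_tree ?w T"
  then obtain t n i where t': "t' = smul_str ?w t"
    and t: "prefix t (r @ concat (map (\<lambda>k. q k (i k)) [0..<Suc n]))"
    unfolding smul_tree_def T by blast
  define i' where "i' = i(0 := \<not> i 0)"
  define rest where "rest = concat (map (\<lambda>k. q k (i k)) [1..<Suc n])"
  have path: "concat (map (\<lambda>k. q k (i k)) [0..<Suc n]) = q 0 (i 0) @ rest"
    unfolding rest_def by (rule concat_map_upt_Suc)
  have path': "concat (map (\<lambda>k. q k (i' k)) [0..<Suc n]) = q 0 (i' 0) @ rest"
    unfolding rest_def concat_map_upt_Suc[of _ n] i'_def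
    by (auto simp del: upt_Suc intro!: arg_cong[where f = concat] map_cong)
  have "smul_str ?w (r @ q 0 (i 0) @ rest) = r @ q 0 (i' 0) @ rest"
    using smul_block_swap[OF assms(1)] smul_block_swap'[OF assms(1)]
    by (cases "i 0") (auto simp: i'_def)
  then have "prefix t' (r @ concat (map (\<lambda>k. q k (i' k)) [0..<Suc n]))"
    using prefix_smul_str[OF t, of ?w] by (simp only: t' path path')
  then show "t' \<in> T" unfolding T by blast
qed

lemma LT_nontrivial_symmetry:
  assumes "LT T"
  obtains w u where "u \<in> T" and "smul_str w u \<noteq> u" and "smul_tree w T \<subseteq> T"
proof -
  from assms obtain q :: "nat \<Rightarrow> bool \<Rightarrow> bool list" where
    len: "\<And>n. length (q n False) = length (q n True) \<and> length (q n True) \<ge> 1"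
    and first: "\<And>n i. q n i ! 0 = i"
    and T: "T = {t. \<exists>(n::nat) i. prefix t (stem T @ concat (map (\<lambda>k. q k (i k)) [0..<Suc n]))}"
    unfolding LT_def by blast
  let ?u = "stem T @ q 0 False" and ?w = "block_swap (stem T) (q 0 False) (q 0 True)"
  have "?u \<in> T"
    by (subst T, rule CollectI, rule exI[of _ 0], rule exI[of _ "\<lambda>_. False"]) simp
  moreover have "smul_str ?w ?u \<noteq> ?u"
    using smul_block_swap[of "q 0 False" "q 0 True" "stem T" "[]"] len[of 0]
      first[of 0 False] first[of 0 True] by auto
  moreover have "smul_tree ?w T \<subseteq> T"
    using block_swap_closed[OF conjunct1[OF len[of 0]] T] .
  ultimately show thesis by (rule that)
qed

lemma smul_tree_in_cprod:
  "LTF P \<Longrightarrow> S \<in> P \<Longrightarrow> (S, smul_tree s S) \<in> cprod P"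
  by (auto simp: cprod_def LTF_def)

theorem corollary5p4:
  assumes "LTF P"
  shows "\<forall>\<sigma>. \<forall>(T, T') \<in> cprod P. \<exists>(S, S') \<in> cprod P.
           S \<subseteq> T \<and> S' \<subseteq> T' \<and> (\<forall>x \<in> body S. smul_real \<sigma> x \<notin> body S')"
proof (intro allI ballI, clarify)
  fix \<sigma> T T'
  assume "(T, T') \<in> cprod P"
  then obtain s where "T \<in> P" and T': "T' = smul_tree s T" by (auto simp: cprod_def)
  with assms obtain w u where "u \<in> T" and "smul_str w u \<noteq> u" and wT: "smul_tree w T \<subseteq> T"
    by (meson LTF_def LT_nontrivial_symmetry)
  define S where "S = restr T u"
  have "S \<in> P" using assms \<open>T \<in> P\<close> \<open>u \<in> T\<close> by (simp add: LTF_def S_def)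
  have "S \<subseteq> T" by (auto simp: S_def restr_def)
  obtain v where v: "v = [] \<or> v = w" and \<sigma>u: "smul_str \<sigma> u \<noteq> smul_str s (smul_str v u)"
    using \<open>smul_str w u \<noteq> u\<close> by (metis smul_str_Nil smul_str_inject)
  let ?S' = "smul_tree s (smul_tree v S)"
  have "(S, ?S') \<in> cprod P"
    using smul_tree_in_cprod[OF assms \<open>S \<in> P\<close>] by (simp add: smul_tree_smul_tree)
  moreover have "?S' \<subseteq> T'"
    using v wT smul_tree_mono[OF \<open>S \<subseteq> T\<close>] unfolding T' by (metis smul_tree_Nil smul_tree_mono order_trans)
  moreover have "\<forall>x\<in>body S. smul_real \<sigma> x \<notin> body ?S'"
    using bodies_separated[OF _ smul_tree_level[OF smul_tree_level] \<sigma>u] restr_level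
    unfolding S_def by blast
  ultimately show "\<exists>(S, S') \<in> cprod P. S \<subseteq> T \<and> S' \<subseteq> T' \<and> (\<forall>x \<in> body S. smul_real \<sigma> x \<notin> body S')"
    using \<open>S \<subseteq> T\<close> by blast
qed

end
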